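(* Let $\lambda$ be a partition, $i$ an index with $\lambda_i=\lambda_{i+1}$, and $\sigma\in\mathrm{Tab}'(\lambda)$ with $\mathrm{Bot}(\sigma)=w$ satisfying $w_i>w_{i+1}$. Let $\sigma'$ be an outcome of $\widetilde\tau_i(\sigma)$. Then $\mathrm{Bot}(\sigma')=s_i\cdot w$ and \[ \mathrm{wt}_{HHL}(\sigma')\,\mathrm{prob}_i(\sigma',\sigma)=t\,\mathrm{wt}_{HHL}(\sigma)\,\mathrm{prob}_i(\sigma,\sigma'). \]
   Context: Let $\lambda=(\lambda_1\ge\dots\ge\lambda_k>0)$, $\mathrm{dg}(\lambda)$ the set of cells $(r,c)$, $1\le c\le k$, $1\le r\le\lambda_c$ (rows bottom to top), $\lambda'_r=\#\{c:\lambda_c\ge r\}$, $n(\lambda)=\sum_r\binom{\lambda'_r}{2}$, $\mathrm{leg}(r,c)=\lambda_c-r$, $\mathrm{arm}(r,c)=\lambda'_r-c$. $\mathcal{Q}(a,b,c)=0$ if $a\le b<c$ or $c<a\le b$ or $b<c<a$, and $1$ otherwise (for $a,b,c\in\mathbb{Z}_{\ge0}\cup\{\infty\}$). $\mathrm{Tab}'(\lambda)$ is the set of inv-non-attacking fillings $\sigma:\mathrm{dg}(\lambda)\to\mathbb{Z}_{>0}$: no two distinct cells in the same row have equal entries and no cells $(r,i),(r+1,j)$ with $i<j$ have equal entries. $\mathrm{Bot}(\sigma)=(\sigma(1,1),\dots,\sigma(1,k))$; $s_i\cdot w$ swaps letters $i,i+1$ of $w$. Statistics: $x^\sigma=\prod_u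 x_{\sigma(u)}$; $\mathrm{maj}(\sigma)=\sum_{u=(r,c),\,r\ge2,\,\sigma(r,c)>\sigma(r-1,c)}(\mathrm{leg}(u)+1)$; for each row $r$ and columns $i<j$ with $(r,i),(r,j)\in\mathrm{dg}(\lambda)$ form $(a,b,c)$ with $a=\sigma(r,i)$, $b=\sigma(r-1,i)$ if $r\ge2$ and $b=\infty$ if $r=1$, $c=\sigma(r,j)$; $\mathrm{inv}(\sigma)$ counts triples with $\mathcal{Q}(a,b,c)=0$, $\mathrm{coinv}=n(\lambda)-\mathrm{inv}$. $\mathrm{wt}_{HHL}(\sigma)=x^\sigma q^{\mathrm{maj}(\sigma)}t^{\mathrm{coinv}(\sigma)}\prod_{u=(r,c),\,r\ge2,\,\sigma(r,c)\ne\sigma(r-1,c)}\frac{1-t}{1-q^{\mathrm{leg}(u)+1}t^{\mathrm{arm}(u)+1}}$. Operators: for $i$ with $\lambda_i=\lambda_{i+1}=L$ and $1\le r\le L$, $\mathfrak{t}_i^{(r)}$ swaps the entries of $(r,i)$ and $(r,i+1)$. $\widetilde\tau_i^{(r)}$ sends $\sigma$ to a finite set of outcomes with transition weights, recursively upward, with $a=\sigma(r,i)$, $b=\sigma(r,i+1)$ and for $r<L$, $c=\sigma(r+1,i)$, $d=\sigma(r+1,i+1)$: (i) $r=L$: outcome $\mathfrak{t}_i^{(L)}\sigma$, weight $1$; (ii) $r<L$ and ($b=c$, or $\{a,b\}\cap\{c,d\}=\emptyset$ and $\mathcal{Q}(c,a,d)=\mathcal{Q}(c,b,d)$): outcome $\mathfrak{t}_i^{(r)}\sigma$,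 weight $1$; (iii) $r<L$ and ($b=d$, or $\{a,b\}\cap\{c,d\}=\emptyset$ and $\mathcal{Q}(c,a,d)\ne\mathcal{Q}(c,b,d)$): the outcomes of $\widetilde\tau_i^{(r+1)}(\mathfrak{t}_i^{(r)}\sigma)$, weights multiplied by $1$; (iv) $r<L$, $a=c$, $b\ne d$: with $\ell'=L-r$ and $A'=\mathrm{arm}(r+1,i+1)+1$, outcome $\mathfrak{t}_i^{(r)}\sigma$ with weight $(q^{\ell'}t^{A'})^{\mathcal{Q}(a,b,d)}\frac{1-t}{1-q^{\ell'}t^{A'+1}}$, and the outcomes of $\widetilde\tau_i^{(r+1)}(\mathfrak{t}_i^{(r)}\sigma)$ with weights multiplied by $t^{1-\mathcal{Q}(a,b,d)}\frac{1-q^{\ell'}t^{A'}}{1-q^{\ell'}t^{A'+1}}$. $\widetilde\tau_i(\sigma)=\widetilde\tau_i^{(1)}(\sigma)$; $\mathrm{prob}_i(\sigma,\sigma')$ is the product of transition weights along the recursion producing the outcome $\sigma'$, and $0$ if $\sigma'$ is not an outcome of $\widetilde\tau_i(\sigma)$. *)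

theory Defs
  imports Main "HOL-Library.Extended_Nat"
begin

(* A partition lambda = (lambda_1 >= ... >= lambda_k > 0) is a list; lambda_c = lam ! (c - 1).
   Cells are pairs (r, c) (row, column), 1-indexed, rows from bottom to top.
   A filling is a function nat * nat => nat; it is normalised to 0 outside the diagram. *)

type_synonym filling = "nat \<times> nat \<Rightarrow> nat"

definition is_partition :: "nat list \<Rightarrow> bool" where
  "is_partition lam \<longleftrightarrow> sorted_wrt (\<ge>) lam \<and> (\<forall>x\<in>set lam. x > 0)"

definition colh :: "nat list \<Rightarrow> nat \<Rightarrow> nat" where
  "colh lam c = lam ! (c - 1)"

definition dg :: "nat list \<Rightarrow> (nat \<times> nat) set" where
  "dg lam = {(r, c). 1 \<le> c \<and> c \<le> length lam \<and> 1 \<le> r \<and> r \<le> colh lam c}"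

definition rowlen :: "nat list \<Rightarrow> nat \<Rightarrow> nat" where
  "rowlen lam r = card {c. 1 \<le> c \<and> c \<le> length lam \<and> colh lam c \<ge> r}"

definition nlam :: "nat list \<Rightarrow> nat" where
  "nlam lam = (\<Sum>r\<in>{1..sum_list lam}. rowlen lam r choose 2)"

definition leg :: "nat list \<Rightarrow> nat \<times> nat \<Rightarrow> nat" where
  "leg lam u = colh lam (snd u) - fst u"

definition arm :: "nat list \<Rightarrow> nat \<times> nat \<Rightarrow> nat" where
  "arm lam u = rowlen lam (fst u) - snd u"

definition Qf :: "enat \<Rightarrow> enat \<Rightarrow> enat \<Rightarrow> nat" where
  "Qf a b c = (if (a \<le> b \<and> b < c) \<or> (c < a \<and> a \<le> b) \<or> (b < c \<and> c < a) then 0 else 1)"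

definition Tab' :: "nat list \<Rightarrow> filling set" where
  "Tab' lam = {\<sigma>. (\<forall>u\<in>dg lam. \<sigma> u > 0) \<and> (\<forall>u. u \<notin> dg lam \<longrightarrow> \<sigma> u = 0)
     \<and> (\<forall>r i j. (r, i) \<in> dg lam \<and> (r, j) \<in> dg lam \<and> i \<noteq> j \<longrightarrow> \<sigma> (r, i) \<noteq> \<sigma> (r, j))
     \<and> (\<forall>r i j. (r, i) \<in> dg lam \<and> (r + 1, j) \<in> dg lam \<and> i < j \<longrightarrow> \<sigma> (r, i) \<noteq> \<sigma> (r + 1, j))}"

definition Bot :: "nat list \<Rightarrow> filling \<Rightarrow> nat list" where
  "Bot lam \<sigma> = map (\<lambda>c. \<sigma> (1, c)) [1..<length lam + 1]"

(* s_i . w : swap letters i and i+1 (1-indexed) *)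
definition sact :: "nat \<Rightarrow> nat list \<Rightarrow> nat list" where
  "sact i w = w[i - 1 := w ! i, i := w ! (i - 1)]"

definition maj :: "nat list \<Rightarrow> filling \<Rightarrow> nat" where
  "maj lam \<sigma> = (\<Sum>u\<in>{u\<in>dg lam. fst u \<ge> 2 \<and> \<sigma> u > \<sigma> (fst u - 1, snd u)}. leg lam u + 1)"

definition below :: "filling \<Rightarrow> nat \<Rightarrow> nat \<Rightarrow> enat" where
  "below \<sigma> r i = (if r \<ge> 2 then enat (\<sigma> (r - 1, i)) else \<infinity>)"

definition inv :: "nat list \<Rightarrow> filling \<Rightarrow> nat" where
  "inv lam \<sigma> = card {(r, i, j). (r, i) \<in> dg lam \<and> (r, j) \<in> dg lam \<and> i < j \<and>
       Qf (enat (\<sigma> (r, i))) (below \<sigma> r i) (enat (\<sigma> (r, j))) = 0}"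

definition coinv :: "nat list \<Rightarrow> filling \<Rightarrow> nat" where
  "coinv lam \<sigma> = nlam lam - inv lam \<sigma>"

definition wtHHL :: "nat list \<Rightarrow> (nat \<Rightarrow> 'a::field) \<Rightarrow> 'a \<Rightarrow> 'a \<Rightarrow> filling \<Rightarrow> 'a" where
  "wtHHL lam x q t \<sigma> =
     (\<Prod>u\<in>dg lam. x (\<sigma> u)) * q ^ maj lam \<sigma> * t ^ coinv lam \<sigma> *
     (\<Prod>u\<in>{u\<in>dg lam. fst u \<ge> 2 \<and> \<sigma> u \<noteq> \<sigma> (fst u - 1, snd u)}.
        (1 - t) / (1 - q ^ (leg lam u + 1) * t ^ (arm lam u + 1)))"

definition tswap :: "nat \<Rightarrow> nat \<Rightarrow> filling \<Rightarrow> filling" where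
  "tswap i r \<sigma> = \<sigma>((r, i) := \<sigma> (r, i + 1), (r, i + 1) := \<sigma> (r, i))"

(* tauR lam q t i n r \<sigma> = list of (outcome, weight) of \<tau>~_i^{(r)}(\<sigma>), where n = L - r
   counts the remaining rows above r (L = lambda_i = lambda_{i+1}). *)
primrec tauR :: "nat list \<Rightarrow> 'a::field \<Rightarrow> 'a \<Rightarrow> nat \<Rightarrow> nat \<Rightarrow> nat \<Rightarrow> filling \<Rightarrow> (filling \<times> 'a) list" where
  "tauR lam q t i 0 r \<sigma> = [(tswap i r \<sigma>, 1)]"
| "tauR lam q t i (Suc n) r \<sigma> =
     (let a = \<sigma> (r, i); b = \<sigma> (r, i + 1); c = \<sigma> (r + 1, i); d = \<sigma> (r + 1, i + 1);
          disj = ({a, b} \<inter> {c, d} = {});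
          Qa = Qf (enat c) (enat a) (enat d); Qb = Qf (enat c) (enat b) (enat d);
          \<sigma>1 = tswap i r \<sigma>
      in if b = c \<or> (disj \<and> Qa = Qb) then [(\<sigma>1, 1)]
         else if b = d \<or> (disj \<and> Qa \<noteq> Qb) then tauR lam q t i n (r + 1) \<sigma>1
         else if a = c then
           (let l' = Suc n; A' = arm lam (r + 1, i + 1) + 1; Qv = Qf (enat a) (enat b) (enat d)
            in (\<sigma>1, (q ^ l' * t ^ A') ^ Qv * ((1 - t) / (1 - q ^ l' * t ^ (A' + 1))))
               # map (\<lambda>p. (fst p, t ^ (1 - Qv) * ((1 - q ^ l' * t ^ A') / (1 - q ^ l' * t ^ (A' + 1))) * snd p))
                   (tauR lam q t i n (r + 1) \<sigma>1))
         else [])"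

definition tau :: "nat list \<Rightarrow> 'a::field \<Rightarrow> 'a \<Rightarrow> nat \<Rightarrow> filling \<Rightarrow> (filling \<times> 'a) list" where
  "tau lam q t i \<sigma> = tauR lam q t i (colh lam i - 1) 1 \<sigma>"

definition outcomes :: "nat list \<Rightarrow> 'a::field \<Rightarrow> 'a \<Rightarrow> nat \<Rightarrow> filling \<Rightarrow> filling set" where
  "outcomes lam q t i \<sigma> = fst ` set (tau lam q t i \<sigma>)"

definition prob :: "nat list \<Rightarrow> 'a::field \<Rightarrow> 'a \<Rightarrow> nat \<Rightarrow> filling \<Rightarrow> filling \<Rightarrow> 'a" where
  "prob lam q t i \<sigma> \<sigma>' = sum_list (map snd (filter (\<lambda>p. fst p = \<sigma>') (tau lam q t i \<sigma>)))"

end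

theory Submission
  imports Defs
begin

text \<open>
  An outcome of \<open>\<tau>\<^sub>i\<close> swaps the entries of columns \<open>i\<close> and \<open>i + 1\<close> in rows \<open>1, \<dots>, k\<close>,
  where the recursion climbs through rows \<open>1, \<dots>, k - 1\<close> and halts at row \<open>k\<close>; the same \<open>k\<close>
  leads back from \<open>\<sigma>'\<close> to \<open>\<sigma>\<close>, so both transition probabilities are products of local
  factors along rows \<open>1, \<dots>, k\<close>. The HHL weight is a product of cell weights and of
  \<open>t\<close>-powers of inversion indicators, and only rows \<open>1, \<dots>, k + 1\<close> of columns \<open>i, i + 1\<close>
  are affected by the swap. Row 1 gains exactly the inversion between columns \<open>i\<close> and
  \<open>i + 1\<close>, which is the factor \<open>t\<close>; in the rows \<open>2, \<dots>, k\<close> the change is compensated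
  by the climbing factors and in row \<open>k + 1\<close> by the halting factor, where a three-term identity
  for \<open>Q\<close> takes care of the inversions with the columns to the right of \<open>i + 1\<close>.
\<close>

section \<open>Outcomes and transition weights of \<open>\<tau>\<^sub>i\<close>\<close>

definition Qnat :: "nat \<Rightarrow> nat \<Rightarrow> nat \<Rightarrow> nat" where
  "Qnat a b c = (if (a \<le> b \<and> b < c) \<or> (c < a \<and> a \<le> b) \<or> (b < c \<and> c < a) then 0 else 1)"

lemma Qf_enat [simp]: "Qf (enat a) (enat b) (enat c) = Qnat a b c"
  by (simp add: Qf_def Qnat_def)

lemma Qnat_le_1: "Qnat a b c \<le> 1"
  by (simp add: Qnat_def)

lemma Qnat_repeat: "x \<noteq> y \<Longrightarrow> Qnat x x y = 0"
  by (auto simp: Qnat_def)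

lemma Qnat_reverse: "x \<noteq> y \<Longrightarrow> y \<noteq> z \<Longrightarrow> x \<noteq> z \<Longrightarrow> Qnat z y x = 1 - Qnat x y z"
  by (auto simp: Qnat_def)

text \<open>On distinct values, \<open>Qnat x y z = 0\<close> exactly when \<open>x, y, z\<close> is cyclically increasing.\<close>

lemma Qnat_orientation:
  "x \<noteq> y \<Longrightarrow> y \<noteq> z \<Longrightarrow> x \<noteq> z \<Longrightarrow>
   Qnat x y z + of_bool (x < y) + of_bool (y < z) + of_bool (z < x) = (2::nat)"
  by (cases "x < y"; cases "y < z"; cases "x < z") (auto simp: Qnat_def)

datatype tau_case = Halt | Climb | Branch | Stuck

text \<open>Cases (ii), (iii), (iv) of \<open>\<tau>\<^sub>i\<^sup>(\<^sup>r\<^sup>)\<close> for the entries \<open>a b\<close> of row \<open>r\<close> and \<open>c d\<close> of row \<open>r + 1\<close>;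
  \<open>Stuck\<close> forces \<open>a = d\<close>, which inv-non-attacking fillings exclude.\<close>

definition tau_case :: "nat \<Rightarrow> nat \<Rightarrow> nat \<Rightarrow> nat \<Rightarrow> tau_case" where
  "tau_case a b c d =
    (if b = c \<or> ({a, b} \<inter> {c, d} = {} \<and> Qnat c a d = Qnat c b d) then Halt
     else if b = d \<or> ({a, b} \<inter> {c, d} = {} \<and> Qnat c a d \<noteq> Qnat c b d) then Climb
     else if a = c then Branch else Stuck)"

definition hhl_factor :: "'a::field \<Rightarrow> 'a \<Rightarrow> nat \<Rightarrow> nat \<Rightarrow> 'a" where
  "hhl_factor q t l A = (1 - t) / (1 - q ^ l * t ^ A)"

definition branch_ratio :: "'a::field \<Rightarrow> 'a \<Rightarrow> nat \<Rightarrow> nat \<Rightarrow> 'a" where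
  "branch_ratio q t l A = (1 - q ^ l * t ^ A) / (1 - q ^ l * t ^ (A + 1))"

definition halt_weight :: "'a::field \<Rightarrow> 'a \<Rightarrow> nat \<Rightarrow> nat \<Rightarrow> nat \<Rightarrow> nat \<Rightarrow> nat \<Rightarrow> nat \<Rightarrow> 'a" where
  "halt_weight q t l A a b c d =
    (case tau_case a b c d of
       Halt \<Rightarrow> 1
     | Branch \<Rightarrow> (q ^ l * t ^ A) ^ Qnat a b d * hhl_factor q t l (A + 1)
     | _ \<Rightarrow> 0)"

definition climb_weight :: "'a::field \<Rightarrow> 'a \<Rightarrow> nat \<Rightarrow> nat \<Rightarrow> nat \<Rightarrow> nat \<Rightarrow> nat \<Rightarrow> nat \<Rightarrow> 'a" where
  "climb_weight q t l A a b c d =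
    (case tau_case a b c d of
       Climb \<Rightarrow> 1
     | Branch \<Rightarrow> t ^ (1 - Qnat a b d) * branch_ratio q t l A
     | _ \<Rightarrow> 0)"

lemma tauR_Suc:
  "tauR lam q t i (Suc n) r \<rho> =
    (let a = \<rho> (r, i); b = \<rho> (r, i + 1); c = \<rho> (r + 1, i); d = \<rho> (r + 1, i + 1);
         A = arm lam (r + 1, i + 1) + 1; \<rho>' = tswap i r \<rho>
     in case tau_case a b c d of
          Halt \<Rightarrow> [(\<rho>', 1)]
        | Climb \<Rightarrow> tauR lam q t i n (r + 1) \<rho>'
        | Branch \<Rightarrow> (\<rho>', halt_weight q t (Suc n) A a b c d)
            # map (\<lambda>p. (fst p, climb_weight q t (Suc n) A a b c d * snd p)) (tauR lam q t i n (r + 1) \<rho>')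
        | Stuck \<Rightarrow> [])"
  by (auto simp: Let_def tau_case_def halt_weight_def climb_weight_def hhl_factor_def branch_ratio_def)

declare tauR.simps(2) [simp del]

definition swap_block :: "nat \<Rightarrow> nat \<Rightarrow> nat \<Rightarrow> filling \<Rightarrow> filling" where
  "swap_block i r k \<rho> = (\<lambda>(s, c).
     if r \<le> s \<and> s \<le> k \<and> c = i then \<rho> (s, i + 1)
     else if r \<le> s \<and> s \<le> k \<and> c = i + 1 then \<rho> (s, i) else \<rho> (s, c))"

lemma tswap_eq_swap_block: "tswap i r \<rho> = swap_block i r r \<rho>"
  by (auto simp: tswap_def swap_block_def fun_eq_iff)

lemma swap_block_tswap: "r \<le> k \<Longrightarrow> swap_block i (r + 1) k (tswap i r \<rho>) = swap_block i r k \<rho>"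
proof (rule ext, clarify)
  fix s c assume "r \<le> k"
  then show "swap_block i (r + 1) k (tswap i r \<rho>) (s, c) = swap_block i r k \<rho> (s, c)"
    by (cases "s = r") (auto simp: tswap_def swap_block_def)
qed

lemma swap_block_swap_block [simp]: "swap_block i r k (swap_block i r k \<rho>) = \<rho>"
  by (auto simp: swap_block_def fun_eq_iff)

lemma swap_block_eq_iff:
  assumes "\<forall>s. r \<le> s \<and> s \<le> N \<longrightarrow> \<rho> (s, i) \<noteq> \<rho> (s, i + 1)" "r \<le> k1" "k1 \<le> N" "r \<le> k2" "k2 \<le> N"
  shows "swap_block i r k1 \<rho> = swap_block i r k2 \<rho> \<longleftrightarrow> k1 = k2"
proof
  assume eq: "swap_block i r k1 \<rho> = swap_block i r k2 \<rho>"
  show "k1 = k2"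
  proof (rule ccontr)
    assume "k1 \<noteq> k2"
    moreover have "swap_block i r k1 \<rho> (max k1 k2, i) = swap_block i r k2 \<rho> (max k1 k2, i)"
      using eq by simp
    moreover have "\<rho> (max k1 k2, i) \<noteq> \<rho> (max k1 k2, i + 1)"
      using assms by (simp add: max_def)
    ultimately show False
      using assms(2-5) by (auto simp: swap_block_def max_def split: if_splits)
  qed
qed simp

definition rule_at :: "nat \<Rightarrow> filling \<Rightarrow> nat \<Rightarrow> tau_case" where
  "rule_at i \<rho> s = tau_case (\<rho> (s, i)) (\<rho> (s, i + 1)) (\<rho> (s + 1, i)) (\<rho> (s + 1, i + 1))"

lemma rule_at_tswap: "r < s \<Longrightarrow> rule_at i (tswap i r \<rho>) s = rule_at i \<rho> s"
  by (simp add: rule_at_def tswap_def)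

text \<open>The total weight with which \<open>\<tau>\<^sub>i\<^sup>(\<^sup>r\<^sup>)\<close> swaps exactly the rows \<open>r, \<dots>, k\<close>, where \<open>n\<close> rows lie above \<open>r\<close>.\<close>

primrec path_weight :: "nat list \<Rightarrow> 'a::field \<Rightarrow> 'a \<Rightarrow> nat \<Rightarrow> nat \<Rightarrow> nat \<Rightarrow> filling \<Rightarrow> nat \<Rightarrow> 'a" where
  "path_weight lam q t i 0 r \<rho> k = (if k = r then 1 else 0)"
| "path_weight lam q t i (Suc n) r \<rho> k =
    (let A = arm lam (r + 1, i + 1) + 1;
         a = \<rho> (r, i); b = \<rho> (r, i + 1); c = \<rho> (r + 1, i); d = \<rho> (r + 1, i + 1)
     in if k = r then halt_weight q t (Suc n) A a b c d
        else climb_weight q t (Suc n) A a b c d * path_weight lam q t i n (r + 1) \<rho> k)"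

lemma path_weight_tswap: "r < r' \<Longrightarrow> path_weight lam q t i n r' (tswap i r \<rho>) k = path_weight lam q t i n r' \<rho> k"
  by (induction n arbitrary: r') (simp_all add: tswap_def Let_def)

lemma tauR_outcome:
  assumes "p \<in> set (tauR lam q t i n r \<rho>)"
  shows "\<exists>k. r \<le> k \<and> k \<le> r + n \<and> fst p = swap_block i r k \<rho> \<and>
    (\<forall>s. r \<le> s \<and> s < k \<longrightarrow> rule_at i \<rho> s \<in> {Climb, Branch}) \<and>
    (k < r + n \<longrightarrow> rule_at i \<rho> k \<in> {Halt, Branch})"
  using assms
proof (induction n arbitrary: r \<rho> p)
  case 0
  then show ?case by (auto simp: tswap_eq_swap_block)
next
  case (Suc n)
  let ?\<rho>' = "tswap i r \<rho>"
  have climb: ?case if rule: "rule_at i \<rho> r \<in> {Climb, Branch}"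
    and p': "p' \<in> set (tauR lam q t i n (r + 1) ?\<rho>')" "fst p = fst p'" for p'
  proof -
    obtain k where k: "r + 1 \<le> k" "k \<le> r + 1 + n" "fst p' = swap_block i (r + 1) k ?\<rho>'"
      "\<forall>s. r + 1 \<le> s \<and> s < k \<longrightarrow> rule_at i ?\<rho>' s \<in> {Climb, Branch}"
      "k < r + 1 + n \<longrightarrow> rule_at i ?\<rho>' k \<in> {Halt, Branch}"
      using Suc.IH[OF p'(1)] by blast
    have "\<forall>s. r \<le> s \<and> s < k \<longrightarrow> rule_at i \<rho> s \<in> {Climb, Branch}"
    proof (intro allI impI)
      fix s assume "r \<le> s \<and> s < k"
      then show "rule_at i \<rho> s \<in> {Climb, Branch}"
        using rule k(4) by (cases "s = r") (auto simp: rule_at_tswap)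
    qed
    moreover have "swap_block i (r + 1) k ?\<rho>' = swap_block i r k \<rho>"
      using k(1) swap_block_tswap[of r k i \<rho>] by simp
    ultimately show ?thesis
      using k p'(2) by (intro exI[of _ k]) (auto simp: rule_at_tswap)
  qed
  show ?case
  proof (cases "rule_at i \<rho> r")
    case Halt
    then show ?thesis using Suc.prems by (auto simp: tauR_Suc rule_at_def tswap_eq_swap_block)
  next
    case Climb
    then show ?thesis using Suc.prems climb by (auto simp: tauR_Suc rule_at_def)
  next
    case Branch
    then have "fst p = ?\<rho>' \<or> (\<exists>p'\<in>set (tauR lam q t i n (r + 1) ?\<rho>'). fst p = fst p')"
      using Suc.prems by (auto simp: tauR_Suc rule_at_def Let_def) force
    then show ?thesis
      using Branch climb by (auto simp: tswap_eq_swap_block)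
  next
    case Stuck
    then show ?thesis using Suc.prems by (simp add: tauR_Suc rule_at_def)
  qed
qed

lemma tauR_avoids_tswap:
  assumes "p \<in> set (tauR lam q t i n (r + 1) (tswap i r \<rho>))"
    and distinct: "\<forall>s. r \<le> s \<and> s \<le> r + 1 + n \<longrightarrow> \<rho> (s, i) \<noteq> \<rho> (s, i + 1)"
  shows "fst p \<noteq> tswap i r \<rho>"
proof -
  obtain k where "r + 1 \<le> k" "k \<le> r + 1 + n" "fst p = swap_block i (r + 1) k (tswap i r \<rho>)"
    using tauR_outcome[OF assms(1)] by auto
  then show ?thesis
    using swap_block_eq_iff[OF distinct, of k r] swap_block_tswap[of r k i \<rho>]
    by (simp add: tswap_eq_swap_block)
qed

lemma sum_list_scaled: "sum_list (map (\<lambda>p. c * snd p) xs) = c * sum_list (map snd xs)"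
  for c :: "'a::comm_semiring_0"
  by (induction xs) (simp_all add: algebra_simps)

lemma tauR_weight:
  assumes "r \<le> k" "k \<le> r + n"
    and distinct: "\<forall>s. r \<le> s \<and> s \<le> r + n \<longrightarrow> \<rho> (s, i) \<noteq> \<rho> (s, i + 1)"
  shows "sum_list (map snd (filter (\<lambda>p. fst p = swap_block i r k \<rho>) (tauR lam q t i n r \<rho>)))
       = path_weight lam q t i n r \<rho> k"
  using assms
proof (induction n arbitrary: r \<rho> k)
  case 0
  then show ?case by (auto simp: tswap_eq_swap_block)
next
  case (Suc n)
  let ?\<rho>' = "tswap i r \<rho>"
  let ?T = "tauR lam q t i n (r + 1) ?\<rho>'"
  have T_avoids_row: "filter (\<lambda>p. fst p = ?\<rho>') ?T = []"
    using tauR_avoids_tswap[of _ lam q t i n r \<rho>] Suc.prems(3) by (auto simp: filter_empty_conv)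
  have T_weight: "sum_list (map snd (filter (\<lambda>p. fst p = swap_block i r k \<rho>) ?T))
      = path_weight lam q t i n (r + 1) \<rho> k" if "k \<noteq> r"
  proof -
    have "r + 1 \<le> k" using that Suc.prems by simp
    moreover have "\<forall>s. r + 1 \<le> s \<and> s \<le> r + 1 + n \<longrightarrow> ?\<rho>' (s, i) \<noteq> ?\<rho>' (s, i + 1)"
      using Suc.prems(3) by (auto simp: tswap_def)
    ultimately show ?thesis
      using Suc.IH[of "r + 1" k ?\<rho>'] Suc.prems swap_block_tswap[of r k i \<rho>]
      by (simp add: path_weight_tswap)
  qed
  have head_ne: "?\<rho>' \<noteq> swap_block i r k \<rho>" if "k \<noteq> r"
    using swap_block_eq_iff[OF Suc.prems(3), of r k] that Suc.prems by (simp add: tswap_eq_swap_block)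
  show ?case
  proof (cases "rule_at i \<rho> r")
    case Halt
    then show ?thesis
      using head_ne by (auto simp: tauR_Suc rule_at_def Let_def halt_weight_def climb_weight_def tswap_eq_swap_block)
  next
    case Climb
    then show ?thesis
      using T_weight T_avoids_row
      by (auto simp: tauR_Suc rule_at_def Let_def halt_weight_def climb_weight_def tswap_eq_swap_block)
  next
    case Branch
    then show ?thesis
      using T_weight T_avoids_row head_ne
      by (auto simp: tauR_Suc rule_at_def Let_def filter_map o_def sum_list_scaled tswap_eq_swap_block)
  next
    case Stuck
    then show ?thesis by (simp add: tauR_Suc rule_at_def Let_def halt_weight_def climb_weight_def)
  qed
qed

section \<open>The HHL weight as a product over cells and inversion triples\<close>

definition inv_triples :: "nat list \<Rightarrow> (nat \<times> nat \<times> nat) set" where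
  "inv_triples lam = {(r, j1, j2). (r, j1) \<in> dg lam \<and> (r, j2) \<in> dg lam \<and> j1 < j2}"

definition triple_Q :: "filling \<Rightarrow> nat \<times> nat \<times> nat \<Rightarrow> nat" where
  "triple_Q \<rho> = (\<lambda>(r, j1, j2). Qf (enat (\<rho> (r, j1))) (below \<rho> r j1) (enat (\<rho> (r, j2))))"

lemma triple_Q_le_1: "triple_Q \<rho> x \<le> 1"
  by (cases x) (simp add: triple_Q_def Qf_def)

lemma dg_subset: "dg lam \<subseteq> {1..sum_list lam} \<times> {1..length lam}"
proof
  fix u assume "u \<in> dg lam"
  then obtain r c where u: "u = (r, c)" "1 \<le> c" "c \<le> length lam" "1 \<le> r" "r \<le> colh lam c"
    by (auto simp: dg_def)
  have "lam ! (c - 1) \<in> set lam" using u by auto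
  then have "colh lam c \<le> sum_list lam" unfolding colh_def by (rule member_le_sum_list) auto
  then show "u \<in> {1..sum_list lam} \<times> {1..length lam}" using u by auto
qed

lemma finite_dg: "finite (dg lam)"
  by (rule finite_subset[OF dg_subset]) auto

lemma finite_inv_triples: "finite (inv_triples lam)"
proof -
  have "inv_triples lam \<subseteq> (\<lambda>(u, v). (fst u, snd u, snd v)) ` (dg lam \<times> dg lam)"
    unfolding inv_triples_def by (auto simp: image_iff) (metis fst_conv snd_conv)
  then show ?thesis by (rule finite_subset) (simp add: finite_dg)
qed

definition row_cols :: "nat list \<Rightarrow> nat \<Rightarrow> nat set" where
  "row_cols lam r = {c. (r, c) \<in> dg lam}"

lemma rowlen_eq_card: "1 \<le> r \<Longrightarrow> rowlen lam r = card (row_cols lam r)"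
  unfolding rowlen_def row_cols_def dg_def by (rule arg_cong[where f = card]) auto

lemma finite_row_cols: "finite (row_cols lam r)"
  by (rule finite_subset[of _ "{1..length lam}"]) (auto simp: row_cols_def dg_def)

lemma card_ordered_pairs:
  assumes "finite S"
  shows "card {(j1, j2). j1 \<in> S \<and> j2 \<in> S \<and> (j1::nat) < j2} = card S choose 2"
proof -
  let ?P = "{(j1, j2). j1 \<in> S \<and> j2 \<in> S \<and> (j1::nat) < j2}"
  have inj: "inj_on (\<lambda>(a, b). {a, b}) ?P"
    by (auto simp: inj_on_def doubleton_eq_iff)
  have "(\<lambda>(a, b). {a, b}) ` ?P = {B. B \<subseteq> S \<and> card B = 2}"
  proof
    show "(\<lambda>(a, b). {a, b}) ` ?P \<subseteq> {B. B \<subseteq> S \<and> card B = 2}" by auto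
  next
    show "{B. B \<subseteq> S \<and> card B = 2} \<subseteq> (\<lambda>(a, b). {a, b}) ` ?P"
    proof
      fix B assume "B \<in> {B. B \<subseteq> S \<and> card B = 2}"
      then obtain a b where B: "B = {a, b}" "a \<noteq> b" "B \<subseteq> S" by (auto simp: card_2_iff)
      show "B \<in> (\<lambda>(a, b). {a, b}) ` ?P"
      proof (cases "a < b")
        case True
        then show ?thesis using B by (auto simp: image_iff intro!: bexI[of _ "(a, b)"])
      next
        case False
        then have "b < a" using B(2) by simp
        then show ?thesis using B by (auto simp: image_iff intro!: bexI[of _ "(b, a)"])
      qed
    qed
  qed
  then have "card ?P = card {B. B \<subseteq> S \<and> card B = 2}" using card_image[OF inj] by simp
  also have "\<dots> = card S choose 2" using n_subsets[OF assms] .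
  finally show ?thesis .
qed

lemma nlam_eq_card: "nlam lam = card (inv_triples lam)"
proof -
  let ?N = "sum_list lam"
  define row where "row r = (\<lambda>(a, b). (r, a, b)) `
    {(j1, j2). j1 \<in> row_cols lam r \<and> j2 \<in> row_cols lam r \<and> j1 < j2}" for r
  have rows: "inv_triples lam = (\<Union>r\<in>{1..?N}. row r)"
    using dg_subset by (fastforce simp: inv_triples_def row_def row_cols_def)
  have fin: "finite (row r)" for r
    unfolding row_def by (rule finite_imageI, rule finite_subset[of _ "row_cols lam r \<times> row_cols lam r"])
      (auto simp: finite_row_cols)
  have card_row: "card (row r) = card (row_cols lam r) choose 2" for r
    unfolding row_def by (subst card_image) (auto simp: inj_on_def card_ordered_pairs finite_row_cols)
  have "card (inv_triples lam) = (\<Sum>r\<in>{1..?N}. card (row r))"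
    unfolding rows by (rule card_UN_disjoint) (simp, simp add: fin, auto simp: row_def)
  also have "\<dots> = nlam lam"
    unfolding nlam_def card_row by (rule sum.cong) (auto simp: rowlen_eq_card)
  finally show ?thesis ..
qed

lemma coinv_eq_sum: "coinv lam \<rho> = (\<Sum>x\<in>inv_triples lam. triple_Q \<rho> x)"
proof -
  have Q01: "triple_Q \<rho> x = (if triple_Q \<rho> x \<noteq> 0 then 1 else 0)" for x
    using triple_Q_le_1[of \<rho> x] by auto
  have "inv lam \<rho> = card {x \<in> inv_triples lam. triple_Q \<rho> x = 0}"
    unfolding inv_def inv_triples_def triple_Q_def by (rule arg_cong[where f = card]) auto
  moreover have "card (inv_triples lam) = card {x \<in> inv_triples lam. triple_Q \<rho> x = 0}
      + card {x \<in> inv_triples lam. triple_Q \<rho> x \<noteq> 0}"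
    using finite_inv_triples by (subst card_Un_disjoint[symmetric]) (auto intro: arg_cong[where f = card])
  moreover have "(\<Sum>x\<in>inv_triples lam. triple_Q \<rho> x) = card {x \<in> inv_triples lam. triple_Q \<rho> x \<noteq> 0}"
    by (subst Q01) (simp add: sum.inter_filter[symmetric] finite_inv_triples del: of_nat_eq_iff)
  ultimately show ?thesis unfolding coinv_def nlam_eq_card by simp
qed

text \<open>The HHL weight of a cell with leg \<open>l - 1\<close> and arm \<open>A - 1\<close>, entry \<open>v\<close> and entry \<open>w\<close> below it.\<close>

definition cell_factor :: "(nat \<Rightarrow> 'a::field) \<Rightarrow> 'a \<Rightarrow> 'a \<Rightarrow> nat \<Rightarrow> nat \<Rightarrow> nat \<Rightarrow> nat \<Rightarrow> 'a" where
  "cell_factor x q t l A v w =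
     x v * q ^ (if w < v then l else 0) * (if v \<noteq> w then hhl_factor q t l A else 1)"

definition cell_weight :: "nat list \<Rightarrow> (nat \<Rightarrow> 'a::field) \<Rightarrow> 'a \<Rightarrow> 'a \<Rightarrow> filling \<Rightarrow> nat \<times> nat \<Rightarrow> 'a" where
  "cell_weight lam x q t \<rho> = (\<lambda>(r, c).
     if r \<ge> 2 then cell_factor x q t (leg lam (r, c) + 1) (arm lam (r, c) + 1) (\<rho> (r, c)) (\<rho> (r - 1, c))
     else x (\<rho> (r, c)))"

lemma wtHHL_eq_cell_weights:
  "wtHHL lam x q t \<rho> = (\<Prod>u\<in>dg lam. cell_weight lam x q t \<rho> u) * t ^ (\<Sum>y\<in>inv_triples lam. triple_Q \<rho> y)"
proof -
  let ?up = "\<lambda>u. 2 \<le> fst u"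
  have maj: "q ^ maj lam \<rho> =
      (\<Prod>u\<in>dg lam. if ?up u \<and> \<rho> (fst u - 1, snd u) < \<rho> u then q ^ (leg lam u + 1) else 1)"
    unfolding maj_def power_sum by (rule prod.inter_filter[OF finite_dg])
  have fac: "(\<Prod>u\<in>{u\<in>dg lam. ?up u \<and> \<rho> u \<noteq> \<rho> (fst u - 1, snd u)}.
        (1 - t) / (1 - q ^ (leg lam u + 1) * t ^ (arm lam u + 1))) =
      (\<Prod>u\<in>dg lam. if ?up u \<and> \<rho> u \<noteq> \<rho> (fst u - 1, snd u)
         then hhl_factor q t (leg lam u + 1) (arm lam u + 1) else 1)"
    unfolding hhl_factor_def by (rule prod.inter_filter[OF finite_dg])
  have cell: "cell_weight lam x q t \<rho> u =
      x (\<rho> u) * (if ?up u \<and> \<rho> (fst u - 1, snd u) < \<rho> u then q ^ (leg lam u + 1) else 1)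
      * (if ?up u \<and> \<rho> u \<noteq> \<rho> (fst u - 1, snd u) then hhl_factor q t (leg lam u + 1) (arm lam u + 1) else 1)"
    for u
    by (cases u) (simp add: cell_weight_def cell_factor_def)
  show ?thesis
    unfolding wtHHL_def maj fac coinv_eq_sum cell prod.distrib by (simp add: mult_ac)
qed

section \<open>Local identities\<close>

lemma branch_ratio_mult_hhl_factor:
  fixes q t :: "'a::field"
  assumes generic: "\<forall>a b. a > 0 \<longrightarrow> q ^ a * t ^ b \<noteq> 1" and "l > 0"
  shows "branch_ratio q t l A * hhl_factor q t l A = hhl_factor q t l (A + 1)"
proof -
  have "1 - q ^ l * t ^ A \<noteq> 0" using generic assms(2) by (metis right_minus_eq)
  moreover have "u \<noteq> 0 \<Longrightarrow> z / u * (u / v) = z / v" for z u v :: 'a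
    by (cases "v = 0") (simp_all add: field_simps)
  ultimately show ?thesis unfolding hhl_factor_def branch_ratio_def by simp
qed

lemma cell_factor_same [simp]: "cell_factor x q t l A v v = x v"
  by (simp add: cell_factor_def)

lemma cell_factor_distinct:
  "v \<noteq> w \<Longrightarrow> cell_factor x q t l A v w = x v * q ^ (if w < v then l else 0) * hhl_factor q t l A"
  by (simp add: cell_factor_def)

text \<open>Rows strictly between the first and the last swapped row: entries \<open>a b\<close> below \<open>c d\<close>
  become \<open>b a\<close> below \<open>d c\<close>, and the climb weights exactly compensate the change of the cell
  weights and of the inversion between columns \<open>i\<close> and \<open>i + 1\<close>.\<close>

lemma climb_identity_Climb:
  fixes q t :: "'a::field"
  assumes generic: "\<forall>a b. a > 0 \<longrightarrow> q ^ a * t ^ b \<noteq> 1" and "l > 0"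
    and climb: "tau_case a b c d = Climb" and "a \<noteq> b" "c \<noteq> d"
  shows "cell_factor x q t l (A + 1) d b * cell_factor x q t l A c a * t ^ Qnat d b c * climb_weight q t l A b a d c
       = cell_factor x q t l (A + 1) c a * cell_factor x q t l A d b * t ^ Qnat c a d * climb_weight q t l A a b c d"
    (is "?L = ?R")
proof -
  consider (same) "b = d" "a = c" | (right) "b = d" "a \<noteq> c" | (disjoint) "b \<noteq> d"
    by auto
  then show ?thesis
  proof cases
    case same
    then have "tau_case b a d c = Climb" using \<open>a \<noteq> b\<close> by (auto simp: tau_case_def)
    then show ?thesis using same climb \<open>a \<noteq> b\<close> by (simp add: climb_weight_def Qnat_repeat)
  next
    case right
    have "b \<noteq> c" using right \<open>c \<noteq> d\<close> by auto
    then have swapped: "tau_case b a d c = Branch" using right \<open>a \<noteq> b\<close> by (auto simp: tau_case_def)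
    have Q: "1 - Qnat d a c = Qnat c a d"
      using Qnat_reverse[of c a d] Qnat_le_1[of c a d] right \<open>a \<noteq> b\<close> \<open>b \<noteq> c\<close> by auto
    have "?L = (x c * x d * q ^ (if a < c then l else 0) * t ^ Qnat c a b) * (branch_ratio q t l A * hhl_factor q t l A)"
      using right climb swapped \<open>b \<noteq> c\<close> \<open>a \<noteq> b\<close>
      by (simp add: climb_weight_def cell_factor_distinct Qnat_repeat Q Q[simplified] mult_ac)
    also have "\<dots> = ?R"
      using right climb \<open>b \<noteq> c\<close> \<open>a \<noteq> b\<close>
      by (simp add: branch_ratio_mult_hhl_factor[OF generic \<open>l > 0\<close>] climb_weight_def cell_factor_distinct mult_ac)
    finally show ?thesis .
  next
    case disjoint
    have h: "b \<noteq> c" "{a, b} \<inter> {c, d} = {}" "Qnat c a d \<noteq> Qnat c b d"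
      using disjoint climb by (auto simp: tau_case_def split: if_splits)
    have Qs: "Qnat d b c = 1 - Qnat c b d" "Qnat d a c = 1 - Qnat c a d"
      using Qnat_reverse[of c b d] Qnat_reverse[of c a d] h \<open>c \<noteq> d\<close> by auto
    have "tau_case b a d c = Climb"
      using h Qs Qnat_le_1[of c a d] Qnat_le_1[of c b d] unfolding tau_case_def by auto
    moreover have "Qnat d b c = Qnat c a d"
      using Qs h Qnat_le_1[of c a d] Qnat_le_1[of c b d] by auto
    ultimately show ?thesis using climb h by (simp add: climb_weight_def cell_factor_distinct mult_ac)
  qed
qed

lemma climb_identity_Branch:
  fixes q t :: "'a::field"
  assumes generic: "\<forall>a b. a > 0 \<longrightarrow> q ^ a * t ^ b \<noteq> 1" and "l > 0"
    and branch: "tau_case a b c d = Branch" and "c \<noteq> d"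
  shows "cell_factor x q t l (A + 1) d b * cell_factor x q t l A c a * t ^ Qnat d b c * climb_weight q t l A b a d c
       = cell_factor x q t l (A + 1) c a * cell_factor x q t l A d b * t ^ Qnat c a d * climb_weight q t l A a b c d"
    (is "?L = ?R")
proof -
  have h: "a = c" "b \<noteq> c" "b \<noteq> d" using branch by (auto simp: tau_case_def split: if_splits)
  have swapped: "tau_case b a d c = Climb" using h \<open>c \<noteq> d\<close> unfolding tau_case_def by auto
  have Q: "Qnat d b c = 1 - Qnat c b d" using Qnat_reverse[of c b d] h \<open>c \<noteq> d\<close> by auto
  have "?L = (x c * x d * q ^ (if b < d then l else 0) * t ^ (1 - Qnat c b d)) * hhl_factor q t l (A + 1)"
    using branch swapped h \<open>c \<noteq> d\<close>
    by (simp add: climb_weight_def cell_factor_distinct Qnat_repeat Q Q[simplified] mult_ac)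
  also have "\<dots> = (x c * x d * q ^ (if b < d then l else 0) * t ^ (1 - Qnat c b d))
      * (branch_ratio q t l A * hhl_factor q t l A)"
    by (simp add: branch_ratio_mult_hhl_factor[OF generic \<open>l > 0\<close>])
  also have "\<dots> = ?R"
    using branch swapped h \<open>c \<noteq> d\<close> by (simp add: climb_weight_def cell_factor_distinct Qnat_repeat mult_ac)
  finally show ?thesis .
qed

text \<open>The last swapped row \<open>k\<close> carries \<open>a b\<close> (becoming \<open>b a\<close>) below the unswapped \<open>c d\<close> of row
  \<open>k + 1\<close>; \<open>S\<close>, \<open>S'\<close> are the inversions of row \<open>k + 1\<close> other than \<open>(i, i + 1)\<close> before and
  after, and \<open>n\<close> is the arm of \<open>(k + 1, i + 1)\<close>.\<close>

lemma halt_identity_Halt: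
  fixes q t :: "'a::field"
  assumes halt: "tau_case a b c d = Halt" and "a \<noteq> b" "c \<noteq> d" "a \<noteq> d"
    and S: "S' + n * Qnat c a d = S + n * Qnat c b d"
  shows "cell_factor x q t l (n + 2) c b * cell_factor x q t l (n + 1) d a * t ^ Qnat c b d * t ^ S'
         * halt_weight q t l (n + 1) b a c d
       = cell_factor x q t l (n + 2) c a * cell_factor x q t l (n + 1) d b * t ^ Qnat c a d * t ^ S
         * halt_weight q t l (n + 1) a b c d"
    (is "?L = ?R")
proof -
  let ?F = "x c * x d * hhl_factor q t l (n + 1) * hhl_factor q t l (n + 2)"
  let ?qe = "\<lambda>v w. if w < v then l else 0"
  consider (repeat) "b = c" | (disjoint) "b \<noteq> c" by auto
  then show ?thesis
  proof cases
    case repeat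
    define Q where "Q = Qnat c a d"
    have "a \<noteq> c" using repeat \<open>a \<noteq> b\<close> by auto
    have swapped: "tau_case b a c d = Branch"
      using halt repeat \<open>a \<noteq> b\<close> \<open>a \<noteq> d\<close> \<open>c \<noteq> d\<close> unfolding tau_case_def by auto
    have eq_q: "?qe d a + l * Q = ?qe c a + ?qe d c"
      using \<open>a \<noteq> c\<close> \<open>a \<noteq> d\<close> \<open>c \<noteq> d\<close> unfolding Q_def
      by (cases "a < c"; cases "a < d"; cases "c < d") (auto simp: Qnat_def)
    have eq_t: "S' + (n + 1) * Q = Q + S" using S repeat \<open>c \<noteq> d\<close> by (simp add: Qnat_repeat Q_def)
    have "?L = ?F * (q ^ ?qe d a * q ^ (l * Q)) * t ^ (S' + (n + 1) * Q)"
      using halt repeat swapped \<open>a \<noteq> c\<close> \<open>a \<noteq> d\<close> \<open>c \<noteq> d\<close>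
      by (simp add: halt_weight_def cell_factor_distinct Qnat_repeat Q_def power_add power_mult
          power_mult_distrib mult_ac)
    also have "\<dots> = ?F * (q ^ ?qe c a * q ^ ?qe d c) * t ^ (Q + S)"
      by (simp only: eq_t flip: power_add eq_q)
    also have "\<dots> = ?R"
      using halt repeat swapped \<open>a \<noteq> c\<close> \<open>a \<noteq> d\<close> \<open>c \<noteq> d\<close>
      by (simp add: halt_weight_def cell_factor_distinct Qnat_repeat Q_def power_add mult_ac)
    finally show ?thesis .
  next
    case disjoint
    have h: "{a, b} \<inter> {c, d} = {}" "Qnat c a d = Qnat c b d"
      using halt disjoint unfolding tau_case_def by (auto split: if_splits)
    have swapped: "tau_case b a c d = Halt" using h unfolding tau_case_def by auto
    have "a \<noteq> c" "a \<noteq> d" "b \<noteq> c" "b \<noteq> d" using h(1) by auto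
    then have eq_q: "?qe c b + ?qe d a = ?qe c a + ?qe d b"
      using h(2) \<open>c \<noteq> d\<close>
      by (cases "a < c"; cases "a < d"; cases "c < d"; cases "b < c"; cases "b < d") (auto simp: Qnat_def)
    have eq_t: "S' = S" using S h by simp
    have "?L = ?F * (q ^ ?qe c b * q ^ ?qe d a) * t ^ Qnat c b d * t ^ S'"
      using halt swapped h by (simp add: halt_weight_def cell_factor_distinct mult_ac)
    also have "\<dots> = ?F * (q ^ ?qe c a * q ^ ?qe d b) * t ^ Qnat c a d * t ^ S"
      by (simp only: eq_t h(2) flip: power_add eq_q)
    also have "\<dots> = ?R"
      using halt swapped h by (simp add: halt_weight_def cell_factor_distinct mult_ac)
    finally show ?thesis .
  qed
qed

lemma halt_identity_Branch:
  fixes q t :: "'a::field"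
  assumes branch: "tau_case a b c d = Branch" and "c \<noteq> d"
    and S: "S' + n * Qnat c a d = S + n * Qnat c b d"
  shows "cell_factor x q t l (n + 2) c b * cell_factor x q t l (n + 1) d a * t ^ Qnat c b d * t ^ S'
         * halt_weight q t l (n + 1) b a c d
       = cell_factor x q t l (n + 2) c a * cell_factor x q t l (n + 1) d b * t ^ Qnat c a d * t ^ S
         * halt_weight q t l (n + 1) a b c d"
    (is "?L = ?R")
proof -
  let ?F = "x c * x d * hhl_factor q t l (n + 1) * hhl_factor q t l (n + 2)"
  let ?qe = "\<lambda>v w. if w < v then l else 0"
  define Q where "Q = Qnat c b d"
  have h: "a = c" "b \<noteq> c" "b \<noteq> d" using branch by (auto simp: tau_case_def split: if_splits)
  have swapped: "tau_case b a c d = Halt" using h unfolding tau_case_def by auto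
  have eq_q: "?qe c b + ?qe d c = ?qe d b + l * Q"
    using h \<open>c \<noteq> d\<close> unfolding Q_def
    by (cases "b < c"; cases "b < d"; cases "c < d") (auto simp: Qnat_def)
  have eq_t: "Q + S' = S + (n + 1) * Q" using S h \<open>c \<noteq> d\<close> by (simp add: Qnat_repeat Q_def)
  have "?L = ?F * (q ^ ?qe c b * q ^ ?qe d c) * t ^ (Q + S')"
    using branch swapped h \<open>c \<noteq> d\<close>
    by (simp add: halt_weight_def cell_factor_distinct Q_def power_add mult_ac)
  also have "\<dots> = ?F * (q ^ ?qe d b * q ^ (l * Q)) * t ^ (S + (n + 1) * Q)"
    by (simp only: eq_t flip: power_add eq_q)
  also have "\<dots> = ?R"
    using branch swapped h \<open>c \<noteq> d\<close>
    by (simp add: halt_weight_def cell_factor_distinct Qnat_repeat Q_def power_add power_mult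
        power_mult_distrib mult_ac)
  finally show ?thesis .
qed

text \<open>Inversions of row \<open>k + 1\<close> between \<open>i\<close> or \<open>i + 1\<close> and a column \<open>j > i + 1\<close> with entry \<open>e\<close>;
  it follows by summing \<open>Qnat_orientation\<close> over the triples involved.\<close>

lemma Qnat_halt_exchange:
  assumes halts: "tau_case a b c d \<in> {Halt, Branch}" and "a \<noteq> b" "c \<noteq> d" "a \<noteq> d"
    and e: "e \<noteq> a" "e \<noteq> b" "e \<noteq> c" "e \<noteq> d"
  shows "Qnat c b e + Qnat d a e + Qnat c a d = Qnat c a e + Qnat d b e + Qnat c b d"
proof -
  note orient = Qnat_orientation
  consider (repeat) "tau_case a b c d = Halt" "b = c"
    | (disjoint) "tau_case a b c d = Halt" "b \<noteq> c"
    | (branch) "tau_case a b c d = Branch"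
    using halts by auto
  then show ?thesis
  proof cases
    case repeat
    then have "a \<noteq> c" using \<open>a \<noteq> b\<close> by simp
    then have "Qnat d a e + of_bool (d < a) + of_bool (a < e) + of_bool (e < d) = 2"
      "Qnat c a d + of_bool (c < a) + of_bool (a < d) + of_bool (d < c) = 2"
      "Qnat c a e + of_bool (c < a) + of_bool (a < e) + of_bool (e < c) = 2"
      "Qnat d c e + of_bool (d < c) + of_bool (c < e) + of_bool (e < d) = 2"
      using \<open>a \<noteq> d\<close> \<open>c \<noteq> d\<close> e by - (rule orient; auto)+
    moreover have "of_bool (d < a) + of_bool (a < d) = (1::nat)" "of_bool (e < c) + of_bool (c < e) = (1::nat)"
      "Qnat c c e = 0" "Qnat c c d = 0"
      using \<open>a \<noteq> d\<close> \<open>c \<noteq> d\<close> e by (auto simp: Qnat_repeat)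
    ultimately show ?thesis unfolding repeat(2) by linarith
  next
    case disjoint
    then have "a \<noteq> c" "b \<noteq> d" unfolding tau_case_def by (auto split: if_splits)
    then have "Qnat c b e + of_bool (c < b) + of_bool (b < e) + of_bool (e < c) = 2"
      "Qnat d a e + of_bool (d < a) + of_bool (a < e) + of_bool (e < d) = 2"
      "Qnat c a d + of_bool (c < a) + of_bool (a < d) + of_bool (d < c) = 2"
      "Qnat c a e + of_bool (c < a) + of_bool (a < e) + of_bool (e < c) = 2"
      "Qnat d b e + of_bool (d < b) + of_bool (b < e) + of_bool (e < d) = 2"
      "Qnat c b d + of_bool (c < b) + of_bool (b < d) + of_bool (d < c) = 2"
      using disjoint \<open>a \<noteq> d\<close> \<open>c \<noteq> d\<close> e by - (rule orient; auto)+
    moreover have "of_bool (d < a) + of_bool (a < d) = (1::nat)" "of_bool (d < b) + of_bool (b < d) = (1::nat)"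
      using \<open>a \<noteq> d\<close> \<open>b \<noteq> d\<close> by auto
    ultimately show ?thesis by linarith
  next
    case branch
    then have "a = c" "b \<noteq> c" "b \<noteq> d" by (auto simp: tau_case_def split: if_splits)
    then have "Qnat c b e + of_bool (c < b) + of_bool (b < e) + of_bool (e < c) = 2"
      "Qnat d c e + of_bool (d < c) + of_bool (c < e) + of_bool (e < d) = 2"
      "Qnat d b e + of_bool (d < b) + of_bool (b < e) + of_bool (e < d) = 2"
      "Qnat c b d + of_bool (c < b) + of_bool (b < d) + of_bool (d < c) = 2"
      using \<open>c \<noteq> d\<close> e by - (rule orient; auto)+
    moreover have "of_bool (e < c) + of_bool (c < e) = (1::nat)" "of_bool (d < b) + of_bool (b < d) = (1::nat)"
      "Qnat c c e = 0" "Qnat c c d = 0"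
      using \<open>b \<noteq> d\<close> \<open>c \<noteq> d\<close> e by (auto simp: Qnat_repeat)
    ultimately show ?thesis unfolding \<open>a = c\<close> by linarith
  qed
qed

section \<open>Two adjacent columns of equal height\<close>

locale twin_columns =
  fixes lam :: "nat list" and i :: nat
  assumes partition: "is_partition lam" and i_ge_1: "1 \<le> i" and i_lt_len: "i + 1 \<le> length lam"
    and equal_heights: "colh lam i = colh lam (i + 1)"
begin

abbreviation "L \<equiv> colh lam i"

lemma height_pos: "1 \<le> L"
proof -
  have "lam ! (i - 1) \<in> set lam" using i_ge_1 i_lt_len by auto
  then show ?thesis using partition unfolding is_partition_def colh_def by auto
qed

lemma colh_ge_height: assumes "1 \<le> c" "c \<le> i + 1" shows "L \<le> colh lam c"
proof (cases "c \<le> i - 1")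
  case True
  then have "c - 1 < i - 1" "i - 1 < length lam" using assms i_lt_len by auto
  then show ?thesis using partition unfolding is_partition_def colh_def
    by (simp add: sorted_wrt_iff_nth_less)
next
  case False
  then have "c = i \<or> c = i + 1" using assms by auto
  then show ?thesis using equal_heights by auto
qed

lemma cell_in_dg: "1 \<le> s \<Longrightarrow> s \<le> L \<Longrightarrow> 1 \<le> c \<Longrightarrow> c \<le> i + 1 \<Longrightarrow> (s, c) \<in> dg lam"
  using colh_ge_height[of c] i_lt_len by (auto simp: dg_def)

lemma twin_cells_in_dg: "1 \<le> s \<Longrightarrow> s \<le> L \<Longrightarrow> (s, i) \<in> dg lam \<and> (s, i + 1) \<in> dg lam"
  using cell_in_dg i_ge_1 by auto

lemma twin_cell_le_height: "(s, c) \<in> dg lam \<Longrightarrow> c = i \<or> c = i + 1 \<Longrightarrow> s \<le> L"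
  using equal_heights by (auto simp: dg_def)

lemma leg_twin: "leg lam (s, i) = L - s" "leg lam (s, i + 1) = L - s"
  using equal_heights by (auto simp: leg_def)

definition right_cols :: "nat \<Rightarrow> nat set" where
  "right_cols s = {j. (s, j) \<in> dg lam \<and> i + 1 < j}"

lemma finite_right_cols: "finite (right_cols s)"
  by (rule finite_subset[OF _ finite_row_cols[of lam s]]) (auto simp: right_cols_def row_cols_def)

lemma arm_twin:
  assumes "1 \<le> s" "s \<le> L"
  shows "arm lam (s, i + 1) = card (right_cols s)" "arm lam (s, i) = card (right_cols s) + 1"
proof -
  have "row_cols lam s = {1..i + 1} \<union> right_cols s"
  proof
    show "row_cols lam s \<subseteq> {1..i + 1} \<union> right_cols s"
      by (auto simp: row_cols_def right_cols_def dg_def)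
    show "{1..i + 1} \<union> right_cols s \<subseteq> row_cols lam s"
      using cell_in_dg assms by (auto simp: row_cols_def right_cols_def)
  qed
  then have "rowlen lam s = card ({1..i + 1} \<union> right_cols s)"
    using rowlen_eq_card assms by simp
  also have "\<dots> = (i + 1) + card (right_cols s)"
    using finite_right_cols[of s] by (subst card_Un_disjoint) (auto simp: right_cols_def)
  finally show "arm lam (s, i + 1) = card (right_cols s)" "arm lam (s, i) = card (right_cols s) + 1"
    unfolding arm_def by simp_all
qed

definition twin_cells :: "nat \<Rightarrow> (nat \<times> nat) set" where
  "twin_cells m = {(s, c). 1 \<le> s \<and> s \<le> m \<and> (c = i \<or> c = i + 1)}"

definition twin_triples :: "nat \<Rightarrow> (nat \<times> nat \<times> nat) set" where
  "twin_triples s = {(r, j1, j2) \<in> inv_triples lam. r = s \<and> {j1, j2} \<inter> {i, i + 1} \<noteq> {}}"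

definition side_triples :: "nat \<Rightarrow> (nat \<times> nat \<times> nat) set" where
  "side_triples s = twin_triples s - {(s, i, i + 1)}"

definition low_twin_triples :: "nat \<Rightarrow> (nat \<times> nat \<times> nat) set" where
  "low_twin_triples m = (\<Union>s\<in>{1..m}. twin_triples s)"

lemma prod_dg_split_twin_cells:
  fixes f :: "nat \<times> nat \<Rightarrow> 'a::comm_monoid_mult"
  assumes "m \<le> L"
  shows "(\<Prod>u\<in>dg lam. f u) = (\<Prod>u\<in>dg lam - twin_cells m. f u) * (\<Prod>s\<in>{1..m}. f (s, i) * f (s, i + 1))"
proof -
  have "twin_cells m \<subseteq> dg lam" using assms cell_in_dg i_ge_1 by (auto simp: twin_cells_def)
  then have "(\<Prod>u\<in>dg lam. f u) = (\<Prod>u\<in>dg lam - twin_cells m. f u) * (\<Prod>u\<in>twin_cells m. f u)"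
    using prod.subset_diff finite_dg by metis
  moreover have "twin_cells m = (\<lambda>s. (s, i)) ` {1..m} \<union> (\<lambda>s. (s, i + 1)) ` {1..m}"
    by (auto simp: twin_cells_def)
  moreover have "(\<Prod>u\<in>(\<lambda>s. (s, i)) ` {1..m} \<union> (\<lambda>s. (s, i + 1)) ` {1..m}. f u)
      = (\<Prod>s\<in>{1..m}. f (s, i) * f (s, i + 1))"
    by (subst prod.union_disjoint) (auto simp: prod.reindex inj_on_def prod.distrib)
  ultimately show ?thesis by simp
qed

lemma finite_twin_triples: "finite (twin_triples s)"
  by (rule finite_subset[OF _ finite_inv_triples[of lam]]) (auto simp: twin_triples_def)

lemma sum_inv_triples_split_twin:
  "(\<Sum>x\<in>inv_triples lam. g x)
   = (\<Sum>x\<in>inv_triples lam - low_twin_triples m. g x) + (\<Sum>s\<in>{1..m}. \<Sum>x\<in>twin_triples s. g x)"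
  for g :: "nat \<times> nat \<times> nat \<Rightarrow> nat"
proof -
  have "low_twin_triples m \<subseteq> inv_triples lam" by (auto simp: low_twin_triples_def twin_triples_def)
  then have "(\<Sum>x\<in>inv_triples lam. g x)
      = (\<Sum>x\<in>inv_triples lam - low_twin_triples m. g x) + (\<Sum>x\<in>low_twin_triples m. g x)"
    using sum.subset_diff finite_inv_triples by metis
  moreover have "(\<Sum>x\<in>low_twin_triples m. g x) = (\<Sum>s\<in>{1..m}. \<Sum>x\<in>twin_triples s. g x)"
    unfolding low_twin_triples_def
    by (rule sum.UNION_disjoint) (simp, simp add: finite_twin_triples, auto simp: twin_triples_def)
  ultimately show ?thesis by simp
qed

lemma sum_twin_triples:
  "1 \<le> s \<Longrightarrow> s \<le> L \<Longrightarrow> (\<Sum>x\<in>twin_triples s. g x) = g (s, i, i + 1) + (\<Sum>x\<in>side_triples s. g x)"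
  for g :: "nat \<times> nat \<times> nat \<Rightarrow> nat"
  unfolding side_triples_def using finite_twin_triples twin_cells_in_dg
  by (subst sum.remove[of _ "(s, i, i + 1)"]) (auto simp: twin_triples_def inv_triples_def)

definition row_weight :: "(nat \<Rightarrow> 'a::field) \<Rightarrow> 'a \<Rightarrow> 'a \<Rightarrow> filling \<Rightarrow> nat \<Rightarrow> 'a" where
  "row_weight x q t \<rho> s = cell_weight lam x q t \<rho> (s, i) * cell_weight lam x q t \<rho> (s, i + 1)
     * t ^ triple_Q \<rho> (s, i, i + 1) * t ^ (\<Sum>y\<in>side_triples s. triple_Q \<rho> y)"

lemma wtHHL_split_rows:
  assumes "m \<le> L"
  shows "wtHHL lam x q t \<rho> = (\<Prod>u\<in>dg lam - twin_cells m. cell_weight lam x q t \<rho> u)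
      * t ^ (\<Sum>y\<in>inv_triples lam - low_twin_triples m. triple_Q \<rho> y)
      * (\<Prod>s\<in>{1..m}. row_weight x q t \<rho> s)"
proof -
  have "(\<Prod>s\<in>{1..m}. t ^ (\<Sum>y\<in>twin_triples s. triple_Q \<rho> y))
      = (\<Prod>s\<in>{1..m}. t ^ triple_Q \<rho> (s, i, i + 1) * t ^ (\<Sum>y\<in>side_triples s. triple_Q \<rho> y))"
    by (rule prod.cong) (use assms sum_twin_triples in \<open>auto simp: power_add\<close>)
  then show ?thesis
    unfolding wtHHL_eq_cell_weights prod_dg_split_twin_cells[OF assms] sum_inv_triples_split_twin[of _ m]
      power_add power_sum row_weight_def prod.distrib
    by (simp add: mult_ac)
qed

end

section \<open>Swapping the bottom rows of the two columns\<close>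

context twin_columns
begin

definition climb_at :: "'a::field \<Rightarrow> 'a \<Rightarrow> filling \<Rightarrow> nat \<Rightarrow> 'a" where
  "climb_at q t \<rho> r = climb_weight q t (L - r) (arm lam (r + 1, i + 1) + 1)
     (\<rho> (r, i)) (\<rho> (r, i + 1)) (\<rho> (r + 1, i)) (\<rho> (r + 1, i + 1))"

definition halt_at :: "'a::field \<Rightarrow> 'a \<Rightarrow> filling \<Rightarrow> nat \<Rightarrow> 'a" where
  "halt_at q t \<rho> r = halt_weight q t (L - r) (arm lam (r + 1, i + 1) + 1)
     (\<rho> (r, i)) (\<rho> (r, i + 1)) (\<rho> (r + 1, i)) (\<rho> (r + 1, i + 1))"

lemma path_weight_below_top:
  assumes "r < L"
  shows "path_weight lam q t i (L - r) r \<rho> k =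
    (if k = r then halt_at q t \<rho> r else climb_at q t \<rho> r * path_weight lam q t i (L - (r + 1)) (r + 1) \<rho> k)"
proof -
  have "L - r = Suc (L - (r + 1))" using assms by simp
  then show ?thesis by (simp add: climb_at_def halt_at_def Let_def)
qed

end

locale twin_swap = twin_columns +
  fixes \<sigma> :: filling and k :: nat
  assumes tableau: "\<sigma> \<in> Tab' lam" and k_ge_1: "1 \<le> k" and k_le_height: "k \<le> L"
begin

abbreviation "\<sigma>' \<equiv> swap_block i (Suc 0) k \<sigma>"

text \<open>Rows above \<open>m\<close> are untouched by the swap, and so are their cell and inversion weights.\<close>

abbreviation "m \<equiv> min (k + 1) L"

definition swap_col :: "nat \<Rightarrow> nat" where
  "swap_col c = (if c = i then i + 1 else if c = i + 1 then i else c)"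

lemma swap_col_swap_col [simp]: "swap_col (swap_col c) = c"
  by (auto simp: swap_col_def)

lemma swap_block_inside: "1 \<le> s \<Longrightarrow> s \<le> k \<Longrightarrow> \<sigma>' (s, c) = \<sigma> (s, swap_col c)"
  by (auto simp: swap_block_def swap_col_def)

lemma swap_block_outside: "\<not> (1 \<le> s \<and> s \<le> k) \<or> (c \<noteq> i \<and> c \<noteq> i + 1) \<Longrightarrow> \<sigma>' (s, c) = \<sigma> (s, c)"
  by (auto simp: swap_block_def)

lemma triple_Q_swap_block:
  "1 \<le> s \<Longrightarrow> s \<le> k \<Longrightarrow> triple_Q \<sigma>' (s, swap_col j1, swap_col j2) = triple_Q \<sigma> (s, j1, j2)"
  by (auto simp: triple_Q_def below_def swap_block_inside)

lemma side_triples_swap_block: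
  assumes "1 \<le> s" "s \<le> k"
  shows "(\<Sum>y\<in>side_triples s. triple_Q \<sigma>' y) = (\<Sum>y\<in>side_triples s. triple_Q \<sigma> y)"
proof -
  define \<phi> :: "nat \<times> nat \<times> nat \<Rightarrow> nat \<times> nat \<times> nat"
    where "\<phi> y = (fst y, swap_col (fst (snd y)), swap_col (snd (snd y)))" for y
  have \<phi>\<phi>: "\<phi> (\<phi> y) = y" for y by (simp add: \<phi>_def)
  have \<phi>_side: "\<phi> y \<in> side_triples s" if side: "y \<in> side_triples s" for y
  proof -
    obtain j1 j2 where y: "y = (s, j1, j2)" using side by (cases y) (auto simp: side_triples_def twin_triples_def)
    then have dg: "(s, j1) \<in> dg lam" "(s, j2) \<in> dg lam" and "j1 < j2"
      and twin: "{j1, j2} \<inter> {i, i + 1} \<noteq> {}" and not_pair: "(j1, j2) \<noteq> (i, i + 1)"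
      using side by (auto simp: side_triples_def twin_triples_def inv_triples_def)
    have "s \<le> L" using dg twin twin_cell_le_height by blast
    then have "(s, swap_col j) \<in> dg lam" if "(s, j) \<in> dg lam" for j
      using that cell_in_dg[OF assms(1)] i_ge_1 by (auto simp: swap_col_def)
    moreover have "swap_col j1 < swap_col j2" using \<open>j1 < j2\<close> not_pair by (auto simp: swap_col_def)
    moreover have "{swap_col j1, swap_col j2} \<inter> {i, i + 1} \<noteq> {}" using twin by (auto simp: swap_col_def)
    moreover have "(swap_col j1, swap_col j2) \<noteq> (i, i + 1)" using \<open>j1 < j2\<close> by (auto simp: swap_col_def)
    ultimately show ?thesis
      using dg by (simp add: y \<phi>_def side_triples_def twin_triples_def inv_triples_def)
  qed
  have "bij_betw \<phi> (side_triples s) (side_triples s)"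
    by (rule bij_betw_byWitness[of _ \<phi>]) (use \<phi>\<phi> \<phi>_side in auto)
  then have "(\<Sum>y\<in>side_triples s. triple_Q \<sigma>' y) = (\<Sum>y\<in>side_triples s. triple_Q \<sigma>' (\<phi> y))"
    by (rule sum.reindex_bij_betw[symmetric])
  also have "\<dots> = (\<Sum>y\<in>side_triples s. triple_Q \<sigma> y)"
  proof (rule sum.cong)
    fix y assume "y \<in> side_triples s"
    then obtain j1 j2 where "y = (s, j1, j2)" by (cases y) (auto simp: side_triples_def twin_triples_def)
    then show "triple_Q \<sigma>' (\<phi> y) = triple_Q \<sigma> y" using triple_Q_swap_block[OF assms] by (simp add: \<phi>_def)
  qed simp
  finally show ?thesis .
qed

lemma cell_weight_above_swap:
  assumes "u \<in> dg lam - twin_cells m"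
  shows "cell_weight lam x q t \<sigma>' u = cell_weight lam x q t \<sigma> u"
proof -
  obtain s c where u: "u = (s, c)" "(s, c) \<in> dg lam" "(s, c) \<notin> twin_cells m"
    using assms by (cases u) auto
  have "1 \<le> s" using u by (auto simp: dg_def)
  have "\<sigma>' (s, c) = \<sigma> (s, c) \<and> \<sigma>' (s - 1, c) = \<sigma> (s - 1, c)"
  proof (cases "c = i \<or> c = i + 1")
    case True
    then have "k + 1 < s"
      using u twin_cell_le_height \<open>1 \<le> s\<close> by (fastforce simp: twin_cells_def)
    then show ?thesis by (auto intro!: swap_block_outside)
  qed (auto intro!: swap_block_outside)
  then show ?thesis using u by (simp add: cell_weight_def)
qed

lemma triple_Q_above_swap:
  assumes "y \<in> inv_triples lam - low_twin_triples m"
  shows "triple_Q \<sigma>' y = triple_Q \<sigma> y"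
proof -
  obtain s j1 j2 where y: "y = (s, j1, j2)" "(s, j1) \<in> dg lam" "(s, j2) \<in> dg lam" "j1 < j2"
    using assms by (auto simp: inv_triples_def)
  have "1 \<le> s" using y by (auto simp: dg_def)
  show ?thesis
  proof (cases "{j1, j2} \<inter> {i, i + 1} = {}")
    case False
    then have "s \<le> L" using twin_cell_le_height y by blast
    moreover have "\<not> s \<le> m"
      using False y \<open>1 \<le> s\<close> assms by (auto simp: low_twin_triples_def twin_triples_def)
    ultimately have "k + 1 < s" by auto
    then have "\<sigma>' (s, j) = \<sigma> (s, j) \<and> \<sigma>' (s - 1, j) = \<sigma> (s - 1, j)" for j
      by (intro conjI swap_block_outside disjI1) linarith+
    then show ?thesis using y by (simp add: triple_Q_def below_def)
  qed (use y in \<open>simp add: triple_Q_def below_def swap_block_outside\<close>)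
qed

lemma row_entries_distinct: "(r, c1) \<in> dg lam \<Longrightarrow> (r, c2) \<in> dg lam \<Longrightarrow> c1 \<noteq> c2 \<Longrightarrow> \<sigma> (r, c1) \<noteq> \<sigma> (r, c2)"
  using tableau by (auto simp: Tab'_def)

lemma non_attacking: "(r, c1) \<in> dg lam \<Longrightarrow> (r + 1, c2) \<in> dg lam \<Longrightarrow> c1 < c2 \<Longrightarrow> \<sigma> (r, c1) \<noteq> \<sigma> (r + 1, c2)"
  using tableau by (auto simp: Tab'_def)

lemma twin_entries_distinct:
  assumes "1 \<le> r" "r < L"
  shows "\<sigma> (r, i) \<noteq> \<sigma> (r, i + 1)" "\<sigma> (r + 1, i) \<noteq> \<sigma> (r + 1, i + 1)" "\<sigma> (r, i) \<noteq> \<sigma> (r + 1, i + 1)"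
  using row_entries_distinct non_attacking twin_cells_in_dg[of r] twin_cells_in_dg[of "r + 1"] assms
  by auto

lemma row_weight_bottom:
  assumes "\<sigma> (1, i + 1) < \<sigma> (1, i)"
  shows "row_weight x q t \<sigma>' 1 = t * row_weight x q t \<sigma> 1"
proof -
  have "cell_weight lam x q t \<sigma>' (1, i) * cell_weight lam x q t \<sigma>' (1, i + 1)
      = cell_weight lam x q t \<sigma> (1, i) * cell_weight lam x q t \<sigma> (1, i + 1)"
    using k_ge_1 by (simp add: cell_weight_def swap_block_inside swap_col_def)
  moreover have "triple_Q \<sigma>' (1, i, i + 1) = 1" "triple_Q \<sigma> (1, i, i + 1) = 0"
    using k_ge_1 assms by (simp_all add: triple_Q_def below_def swap_block_inside swap_col_def Qf_def)
  ultimately show ?thesis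
    using side_triples_swap_block[of 1] k_ge_1 by (simp add: row_weight_def mult_ac)
qed

lemma row_weight_climb:
  fixes x :: "nat \<Rightarrow> 'a::field" and q t :: 'a
  assumes generic: "\<forall>a b. a > 0 \<longrightarrow> q ^ a * t ^ b \<noteq> 1"
    and "1 \<le> r" "r < k" and climbs: "rule_at i \<sigma> r \<in> {Climb, Branch}"
  shows "row_weight x q t \<sigma>' (r + 1) * climb_at q t \<sigma>' r = row_weight x q t \<sigma> (r + 1) * climb_at q t \<sigma> r"
proof -
  define a b c d where "a = \<sigma> (r, i)" "b = \<sigma> (r, i + 1)" "c = \<sigma> (r + 1, i)" "d = \<sigma> (r + 1, i + 1)"
  define A where "A = arm lam (r + 1, i + 1) + 1"
  have "r + 1 \<le> L" using \<open>r < k\<close> k_le_height by simp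
  have leg: "leg lam (r + 1, i) + 1 = L - r" "leg lam (r + 1, i + 1) + 1 = L - r"
    using leg_twin \<open>r + 1 \<le> L\<close> by auto
  have arm: "arm lam (r + 1, i) + 1 = A + 1" using arm_twin[of "r + 1"] \<open>r + 1 \<le> L\<close> by (simp add: A_def)
  have swapped: "\<sigma>' (r, i) = b" "\<sigma>' (r, i + 1) = a" "\<sigma>' (r + 1, i) = d" "\<sigma>' (r + 1, i + 1) = c"
    using \<open>1 \<le> r\<close> \<open>r < k\<close> by (simp_all add: swap_block_inside swap_col_def a_b_c_d_def)
  have "a \<noteq> b" "c \<noteq> d" "a \<noteq> d"
    using twin_entries_distinct \<open>1 \<le> r\<close> \<open>r + 1 \<le> L\<close> unfolding a_b_c_d_def by auto
  moreover have "L - r > 0" using \<open>r + 1 \<le> L\<close> by simp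
  ultimately have "cell_factor x q t (L - r) (A + 1) d b * cell_factor x q t (L - r) A c a * t ^ Qnat d b c
        * climb_weight q t (L - r) A b a d c
      = cell_factor x q t (L - r) (A + 1) c a * cell_factor x q t (L - r) A d b * t ^ Qnat c a d
        * climb_weight q t (L - r) A a b c d"
    using climbs climb_identity_Climb[OF generic] climb_identity_Branch[OF generic]
    by (auto simp: rule_at_def a_b_c_d_def)
  moreover have "triple_Q \<sigma>' (r + 1, i, i + 1) = Qnat d b c" "triple_Q \<sigma> (r + 1, i, i + 1) = Qnat c a d"
    using swapped \<open>1 \<le> r\<close> by (simp_all add: triple_Q_def below_def a_b_c_d_def)
  ultimately show ?thesis
    using side_triples_swap_block[of "r + 1"] \<open>1 \<le> r\<close> \<open>r < k\<close> swapped leg arm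
    by (simp add: row_weight_def climb_at_def cell_weight_def A_def a_b_c_d_def mult_ac)
qed

lemma triple_Q_right_col_exchange:
  assumes "k < L" and halts: "rule_at i \<sigma> k \<in> {Halt, Branch}" and "j \<in> right_cols (k + 1)"
  shows "triple_Q \<sigma>' (k + 1, i, j) + triple_Q \<sigma>' (k + 1, i + 1, j) + Qnat (\<sigma> (k + 1, i)) (\<sigma> (k, i)) (\<sigma> (k + 1, i + 1))
       = triple_Q \<sigma> (k + 1, i, j) + triple_Q \<sigma> (k + 1, i + 1, j) + Qnat (\<sigma> (k + 1, i)) (\<sigma> (k, i + 1)) (\<sigma> (k + 1, i + 1))"
proof -
  define a b c d e where "a = \<sigma> (k, i)" "b = \<sigma> (k, i + 1)" "c = \<sigma> (k + 1, i)" "d = \<sigma> (k + 1, i + 1)"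
    "e = \<sigma> (k + 1, j)"
  have j: "(k + 1, j) \<in> dg lam" "i + 1 < j" using assms(3) by (auto simp: right_cols_def)
  have "a \<noteq> b" "c \<noteq> d" "a \<noteq> d"
    using twin_entries_distinct k_ge_1 \<open>k < L\<close> unfolding a_b_c_d_e_def by auto
  moreover have "e \<noteq> a" "e \<noteq> b" "e \<noteq> c" "e \<noteq> d"
    using non_attacking[of k i j] non_attacking[of k "i + 1" j] row_entries_distinct[of "k + 1" i j]
      row_entries_distinct[of "k + 1" "i + 1" j] twin_cells_in_dg[of k] twin_cells_in_dg[of "k + 1"] j
      k_ge_1 \<open>k < L\<close>
    unfolding a_b_c_d_e_def by auto
  moreover have "\<sigma>' (k + 1, j) = e" "\<sigma>' (k + 1, i) = c" "\<sigma>' (k + 1, i + 1) = d"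
    using j by (simp_all add: a_b_c_d_e_def swap_block_outside)
  moreover have "\<sigma>' (k, i) = b" "\<sigma>' (k, i + 1) = a"
    using k_ge_1 by (simp_all add: swap_block_inside swap_col_def a_b_c_d_e_def)
  ultimately show ?thesis
    using Qnat_halt_exchange[OF _ \<open>a \<noteq> b\<close> \<open>c \<noteq> d\<close> \<open>a \<noteq> d\<close>] halts k_ge_1
    by (simp add: triple_Q_def below_def rule_at_def a_b_c_d_e_def)
qed

lemma side_triples_halt_row:
  assumes "k < L" and halts: "rule_at i \<sigma> k \<in> {Halt, Branch}"
  defines "a \<equiv> \<sigma> (k, i)" and "b \<equiv> \<sigma> (k, i + 1)" and "c \<equiv> \<sigma> (k + 1, i)" and "d \<equiv> \<sigma> (k + 1, i + 1)"
    and "n \<equiv> arm lam (k + 1, i + 1)"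
  shows "(\<Sum>y\<in>side_triples (k + 1). triple_Q \<sigma>' y) + n * Qnat c a d
       = (\<Sum>y\<in>side_triples (k + 1). triple_Q \<sigma> y) + n * Qnat c b d"
proof -
  let ?s = "k + 1"
  let ?J = "right_cols ?s"
  define B where "B = (\<lambda>j. (?s, i, j)) ` ?J \<union> (\<lambda>j. (?s, i + 1, j)) ` ?J"
  have "1 \<le> ?s" "?s \<le> L" using \<open>k < L\<close> by auto
  have B_side: "B \<subseteq> side_triples ?s"
    using twin_cells_in_dg[OF \<open>1 \<le> ?s\<close> \<open>?s \<le> L\<close>]
    by (auto simp: B_def side_triples_def twin_triples_def inv_triples_def right_cols_def)
  have fin: "finite (side_triples ?s)" using finite_twin_triples by (simp add: side_triples_def)
  have split: "(\<Sum>y\<in>side_triples ?s. triple_Q \<rho> y) = (\<Sum>y\<in>side_triples ?s - B. triple_Q \<rho> y)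
      + (\<Sum>j\<in>?J. triple_Q \<rho> (?s, i, j) + triple_Q \<rho> (?s, i + 1, j))" for \<rho>
  proof -
    have "(\<Sum>y\<in>B. triple_Q \<rho> y) = (\<Sum>j\<in>?J. triple_Q \<rho> (?s, i, j) + triple_Q \<rho> (?s, i + 1, j))"
      unfolding B_def
      by (subst sum.union_disjoint) (auto simp: finite_right_cols sum.reindex inj_on_def sum.distrib)
    then show ?thesis using sum.subset_diff[OF B_side fin, of "triple_Q \<rho>"] by simp
  qed
  have rest: "triple_Q \<sigma>' y = triple_Q \<sigma> y" if y_rest: "y \<in> side_triples ?s - B" for y
  proof -
    obtain j1 j2 where y: "y = (?s, j1, j2)" "(?s, j1) \<in> dg lam" "(?s, j2) \<in> dg lam" "j1 < j2"
      using y_rest by (cases y) (auto simp: side_triples_def twin_triples_def inv_triples_def)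
    have "j1 \<noteq> i" "j1 \<noteq> i + 1"
      using y_rest y by (auto simp: B_def right_cols_def side_triples_def)
    then have "\<sigma>' (?s, j1) = \<sigma> (?s, j1)" "\<sigma>' (?s, j2) = \<sigma> (?s, j2)" "\<sigma>' (k, j1) = \<sigma> (k, j1)"
      by (auto intro!: swap_block_outside)
    then show ?thesis using y by (simp add: triple_Q_def below_def)
  qed
  have "card ?J = n" using arm_twin[OF \<open>1 \<le> ?s\<close> \<open>?s \<le> L\<close>] by (simp add: n_def)
  then have "(\<Sum>j\<in>?J. triple_Q \<sigma>' (?s, i, j) + triple_Q \<sigma>' (?s, i + 1, j)) + n * Qnat c a d
      = (\<Sum>j\<in>?J. triple_Q \<sigma> (?s, i, j) + triple_Q \<sigma> (?s, i + 1, j)) + n * Qnat c b d"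
    using sum.cong[OF refl triple_Q_right_col_exchange[OF assms(1,2)], of ?J]
    by (simp add: sum.distrib a_def b_def c_def d_def)
  moreover have "(\<Sum>y\<in>side_triples ?s - B. triple_Q \<sigma>' y) = (\<Sum>y\<in>side_triples ?s - B. triple_Q \<sigma> y)"
    using rest by (rule sum.cong[OF refl])
  ultimately show ?thesis unfolding split by simp
qed

lemma row_weight_halt:
  assumes "k < L" and halts: "rule_at i \<sigma> k \<in> {Halt, Branch}"
  shows "row_weight x q t \<sigma>' (k + 1) * halt_at q t \<sigma>' k = row_weight x q t \<sigma> (k + 1) * halt_at q t \<sigma> k"
proof -
  define a b c d where "a = \<sigma> (k, i)" "b = \<sigma> (k, i + 1)" "c = \<sigma> (k + 1, i)" "d = \<sigma> (k + 1, i + 1)"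
  define n where "n = arm lam (k + 1, i + 1)"
  have leg: "leg lam (k + 1, i) + 1 = L - k" "leg lam (k + 1, i + 1) + 1 = L - k"
    using leg_twin \<open>k < L\<close> by auto
  have arm: "arm lam (k + 1, i) + 1 = n + 2" using arm_twin[of "k + 1"] \<open>k < L\<close> by (simp add: n_def)
  have swapped: "\<sigma>' (k, i) = b" "\<sigma>' (k, i + 1) = a" "\<sigma>' (k + 1, i) = c" "\<sigma>' (k + 1, i + 1) = d"
    using k_ge_1 by (simp_all add: swap_block_inside swap_block_outside swap_col_def a_b_c_d_def)
  have "a \<noteq> b" "c \<noteq> d" "a \<noteq> d"
    using twin_entries_distinct k_ge_1 \<open>k < L\<close> unfolding a_b_c_d_def by auto
  then have "cell_factor x q t (L - k) (n + 2) c b * cell_factor x q t (L - k) (n + 1) d a * t ^ Qnat c b d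
        * t ^ (\<Sum>y\<in>side_triples (k + 1). triple_Q \<sigma>' y) * halt_weight q t (L - k) (n + 1) b a c d
      = cell_factor x q t (L - k) (n + 2) c a * cell_factor x q t (L - k) (n + 1) d b * t ^ Qnat c a d
        * t ^ (\<Sum>y\<in>side_triples (k + 1). triple_Q \<sigma> y) * halt_weight q t (L - k) (n + 1) a b c d"
    using halt_identity_Halt halt_identity_Branch side_triples_halt_row[OF assms] halts
    by (auto simp: rule_at_def a_b_c_d_def n_def)
  moreover have "triple_Q \<sigma>' (k + 1, i, i + 1) = Qnat c b d" "triple_Q \<sigma> (k + 1, i, i + 1) = Qnat c a d"
    using swapped k_ge_1 by (simp_all add: triple_Q_def below_def a_b_c_d_def)
  ultimately show ?thesis
    using swapped leg arm k_ge_1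
    by (simp add: row_weight_def halt_at_def cell_weight_def n_def a_b_c_d_def mult_ac)
qed

lemma row_weights_path_weight:
  fixes x :: "nat \<Rightarrow> 'a::field" and q t :: 'a
  assumes generic: "\<forall>a b. a > 0 \<longrightarrow> q ^ a * t ^ b \<noteq> 1"
    and climbs: "\<forall>s. 1 \<le> s \<and> s < k \<longrightarrow> rule_at i \<sigma> s \<in> {Climb, Branch}"
    and halts: "k < L \<longrightarrow> rule_at i \<sigma> k \<in> {Halt, Branch}"
    and "1 \<le> r" "r \<le> k"
  shows "(\<Prod>s\<in>{r + 1..m}. row_weight x q t \<sigma>' s) * path_weight lam q t i (L - r) r \<sigma>' k
       = (\<Prod>s\<in>{r + 1..m}. row_weight x q t \<sigma> s) * path_weight lam q t i (L - r) r \<sigma> k"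
  using assms(4,5)
proof (induction "k - r" arbitrary: r)
  case 0
  then have "r = k" by simp
  show ?case
  proof (cases "k = L")
    case False
    then have "k < L" "m = k + 1" using k_le_height by auto
    then show ?thesis
      using row_weight_halt halts \<open>r = k\<close> by (simp add: path_weight_below_top)
  qed (simp add: \<open>r = k\<close>)
next
  case (Suc d)
  then have "r < k" "r < L" "r + 1 \<le> m" using k_le_height by auto
  have IH: "(\<Prod>s\<in>{r + 2..m}. row_weight x q t \<sigma>' s) * path_weight lam q t i (L - (r + 1)) (r + 1) \<sigma>' k
      = (\<Prod>s\<in>{r + 2..m}. row_weight x q t \<sigma> s) * path_weight lam q t i (L - (r + 1)) (r + 1) \<sigma> k"
    using Suc \<open>r < k\<close> by (simp add: numeral_2_eq_2)
  have split: "(\<Prod>s\<in>{r + 1..m}. g s) = g (r + 1) * (\<Prod>s\<in>{r + 2..m}. g s)" for g :: "nat \<Rightarrow> 'a"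
    using prod.atLeast_Suc_atMost[OF \<open>r + 1 \<le> m\<close>, of g] by simp
  have "row_weight x q t \<sigma>' (r + 1) * climb_at q t \<sigma>' r = row_weight x q t \<sigma> (r + 1) * climb_at q t \<sigma> r"
    using row_weight_climb[OF generic \<open>1 \<le> r\<close> \<open>r < k\<close>] climbs \<open>1 \<le> r\<close> \<open>r < k\<close> by simp
  then show ?case
    using IH \<open>r < k\<close> unfolding split path_weight_below_top[OF \<open>r < L\<close>]
    by (simp add: mult_ac)
qed

lemma wtHHL_swap_block:
  fixes x :: "nat \<Rightarrow> 'a::field" and q t :: 'a
  assumes generic: "\<forall>a b. a > 0 \<longrightarrow> q ^ a * t ^ b \<noteq> 1"
    and climbs: "\<forall>s. 1 \<le> s \<and> s < k \<longrightarrow> rule_at i \<sigma> s \<in> {Climb, Branch}"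
    and halts: "k < L \<longrightarrow> rule_at i \<sigma> k \<in> {Halt, Branch}"
    and descent: "\<sigma> (1, i + 1) < \<sigma> (1, i)"
  shows "wtHHL lam x q t \<sigma>' * path_weight lam q t i (L - 1) 1 \<sigma>' k
       = t * (wtHHL lam x q t \<sigma> * path_weight lam q t i (L - 1) 1 \<sigma> k)"
proof -
  have "m \<le> L" "1 \<le> m" using k_ge_1 height_pos by auto
  have split: "(\<Prod>s\<in>{1..m}. g s) = g 1 * (\<Prod>s\<in>{2..m}. g s)" for g :: "nat \<Rightarrow> 'a"
    using prod.atLeast_Suc_atMost[OF \<open>1 \<le> m\<close>, of g] by (simp add: numeral_2_eq_2)
  have "(\<Prod>u\<in>dg lam - twin_cells m. cell_weight lam x q t \<sigma>' u)
      = (\<Prod>u\<in>dg lam - twin_cells m. cell_weight lam x q t \<sigma> u)"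
    by (intro prod.cong refl cell_weight_above_swap)
  moreover have "(\<Sum>y\<in>inv_triples lam - low_twin_triples m. triple_Q \<sigma>' y)
      = (\<Sum>y\<in>inv_triples lam - low_twin_triples m. triple_Q \<sigma> y)"
    by (intro sum.cong refl triple_Q_above_swap)
  moreover have "(\<Prod>s\<in>{2..m}. row_weight x q t \<sigma>' s) * path_weight lam q t i (L - 1) 1 \<sigma>' k
      = (\<Prod>s\<in>{2..m}. row_weight x q t \<sigma> s) * path_weight lam q t i (L - 1) 1 \<sigma> k"
    using row_weights_path_weight[OF generic climbs halts, of 1 x] k_ge_1 by (simp add: numeral_2_eq_2)
  ultimately show ?thesis
    unfolding wtHHL_split_rows[OF \<open>m \<le> L\<close>] split row_weight_bottom[OF descent]
    by (simp add: mult_ac)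
qed

end

lemma Bot_nth: "j < length lam \<Longrightarrow> Bot lam \<rho> ! j = \<rho> (1, j + 1)"
  by (simp add: Bot_def del: upt_Suc)

lemma length_Bot: "length (Bot lam \<rho>) = length lam"
  by (simp add: Bot_def del: upt_Suc)

lemma Bot_swap_block:
  assumes "1 \<le> i" "i + 1 \<le> length lam" "1 \<le> k"
  shows "Bot lam (swap_block i 1 k \<rho>) = sact i (Bot lam \<rho>)"
proof (rule nth_equalityI)
  fix j assume "j < length (Bot lam (swap_block i 1 k \<rho>))"
  then have "j < length lam" by (simp add: length_Bot)
  then show "Bot lam (swap_block i 1 k \<rho>) ! j = sact i (Bot lam \<rho>) ! j"
    using assms by (auto simp: Bot_nth length_Bot sact_def nth_list_update swap_block_def)
qed (simp add: length_Bot sact_def)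

theorem mainTheorem7:
  fixes lam :: "nat list" and i :: nat and \<sigma> \<sigma>' :: filling
    and q t :: "'a::field" and x :: "nat \<Rightarrow> 'a"
  assumes "is_partition lam"
    and "1 \<le> i" and "i + 1 \<le> length lam"
    and "colh lam i = colh lam (i + 1)"
    and "\<sigma> \<in> Tab' lam"
    and "Bot lam \<sigma> ! (i - 1) > Bot lam \<sigma> ! i"
    and "\<sigma>' \<in> outcomes lam q t i \<sigma>"
    and generic: "\<forall>a b. a > 0 \<longrightarrow> q ^ a * t ^ b \<noteq> 1"
  shows "Bot lam \<sigma>' = sact i (Bot lam \<sigma>) \<and>
         wtHHL lam x q t \<sigma>' * prob lam q t i \<sigma>' \<sigma> = t * wtHHL lam x q t \<sigma> * prob lam q t i \<sigma> \<sigma>'"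
proof -
  interpret twin_columns lam i using assms(1-4) by unfold_locales
  have top: "1 + (L - 1) = L" using height_pos by simp
  obtain p where p: "p \<in> set (tauR lam q t i (L - 1) 1 \<sigma>)" "\<sigma>' = fst p"
    using assms(7) by (auto simp: outcomes_def tau_def)
  obtain k where k: "1 \<le> k" "k \<le> L" "\<sigma>' = swap_block i 1 k \<sigma>"
    and climbs: "\<forall>s. 1 \<le> s \<and> s < k \<longrightarrow> rule_at i \<sigma> s \<in> {Climb, Branch}"
    and halts: "k < L \<longrightarrow> rule_at i \<sigma> k \<in> {Halt, Branch}"
    using tauR_outcome[OF p(1)] unfolding top p(2)[symmetric] by blast
  interpret twin_swap lam i \<sigma> k using assms(5) k by unfold_locales
  have distinct: "\<forall>s. 1 \<le> s \<and> s \<le> 1 + (L - 1) \<longrightarrow> \<sigma> (s, i) \<noteq> \<sigma> (s, i + 1)"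
    unfolding top using row_entries_distinct twin_cells_in_dg by auto
  then have distinct': "\<forall>s. 1 \<le> s \<and> s \<le> 1 + (L - 1) \<longrightarrow> \<sigma>' (s, i) \<noteq> \<sigma>' (s, i + 1)"
    unfolding k(3) by (auto simp: swap_block_def)
  have "prob lam q t i \<sigma> \<sigma>' = path_weight lam q t i (L - 1) 1 \<sigma> k"
    using tauR_weight[OF k(1) _ distinct] k by (simp add: prob_def tau_def top)
  moreover have "prob lam q t i \<sigma>' \<sigma> = path_weight lam q t i (L - 1) 1 \<sigma>' k"
    using tauR_weight[OF k(1) _ distinct'] k by (simp add: prob_def tau_def top)
  moreover have "\<sigma> (1, i + 1) < \<sigma> (1, i)"
    using assms(2,3,6) Bot_nth[of i lam \<sigma>] Bot_nth[of "i - 1" lam \<sigma>] by simp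
  ultimately show ?thesis
    using wtHHL_swap_block[OF generic climbs halts] Bot_swap_block[OF assms(2,3) k(1)] k(3)
    by (simp add: mult_ac)
qed

end
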